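(* Suppose that $A$ is an algorithm with the following properties: $A$ is given $N$, an accuracy parameter $\epsilon>0$, a confidence parameter $\delta>0$, and distinct non-negative integers $0=a_1,\dots,a_k$; $A$ is provided with access to i.i.d. draws from a distribution $\mathbf{S}=a_2\mathbf{S}_2+\cdots+a_k\mathbf{S}_k$ where the $\mathbf{S}_i$ are independent unknown PBD$_N$ distributions; for all $N$, $A$ makes $m(a_1,\dots,a_k,\epsilon,\delta)$ draws from $\mathbf{S}$ and with probability at least $1-\delta$ outputs a hypothesis $\tilde{\mathbf{S}}$ such that $d_{TV}(\mathbf{S},\tilde{\mathbf{S}})\le\epsilon$. Then there is an algorithm $A'$ with the following properties: $A'$ is given $N,0=a_1,\dots,a_k,\epsilon,\delta$ and is provided with access to i.i.d. draws from $\mathbf{T}':=(\mathbf{T}\bmod a_k)$ where $\mathbf{T}=a_2\mathbf{T}_2+\cdots+a_{k-1}\mathbf{T}_{k-1}$ and the $\mathbf{T}_i$ are independent PBD$_N$ distributions; $A'$ makes $m'=m(a_1,\dots,a_k,\epsilon,\delta/2)$ draws from $\mathbf{T}'$ and with probability $1-\delta$ outputs a hypothesis $\tilde{\mathbf{T}}'$ such that $d_{TV}(\mathbf{T}',\tilde{\mathbf{T}}')\le\epsilon$.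
   Context: A PBD$_N$ (Poisson Binomial Distribution) is a sum of $N$ mutually independent (not necessarily identical) Bernoulli random variables. $d_{TV}$ denotes total variation distance. *)

theory Defs
  imports "HOL-Probability.Probability"
begin

primrec pbd :: "(nat \<Rightarrow> real) \<Rightarrow> nat \<Rightarrow> nat pmf" where
  "pbd p 0 = return_pmf 0"
| "pbd p (Suc n) = bind_pmf (pbd p n) (\<lambda>x. map_pmf (\<lambda>b. x + (if b then 1 else 0)) (bernoulli_pmf (p n)))"

definition PBD :: "nat \<Rightarrow> nat pmf set" where
  "PBD N = {pbd p N | p. \<forall>i<N. 0 \<le> p i \<and> p i \<le> 1}"

fun lin_comb :: "nat list \<Rightarrow> nat pmf list \<Rightarrow> nat pmf" where
  "lin_comb (c # cs) (D # Ds) =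
     bind_pmf D (\<lambda>x. map_pmf (\<lambda>y. c * x + y) (lin_comb cs Ds))"
| "lin_comb _ _ = return_pmf 0"

primrec iid :: "nat \<Rightarrow> 'a pmf \<Rightarrow> 'a list pmf" where
  "iid 0 D = return_pmf []"
| "iid (Suc n) D = bind_pmf D (\<lambda>x. map_pmf (\<lambda>xs. x # xs) (iid n D))"

definition dtv :: "'a pmf \<Rightarrow> 'a pmf \<Rightarrow> real" where
  "dtv P Q = (SUP E. \<bar>measure_pmf.prob P E - measure_pmf.prob Q E\<bar>)"

definition valid_weights :: "nat list \<Rightarrow> bool" where
  "valid_weights a \<longleftrightarrow> 2 \<le> length a \<and> hd a = 0 \<and> distinct a"

definition run_learner ::
  "(nat \<Rightarrow> real \<Rightarrow> real \<Rightarrow> nat list \<Rightarrow> nat list \<Rightarrow> nat pmf pmf)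
   \<Rightarrow> nat \<Rightarrow> real \<Rightarrow> real \<Rightarrow> nat list \<Rightarrow> nat \<Rightarrow> nat pmf \<Rightarrow> nat pmf pmf" where
  "run_learner L N eps delta a q D = bind_pmf (iid q D) (L N eps delta a)"

end

theory Submission
  imports Defs
begin

text \<open>
  Let \<open>c\<close> be the last weight and \<open>Z\<close> a Bin(2R, 1/2) variable independent of \<open>T\<close>; \<open>Z\<close> is itself
  a PBD on 2R trials, so the given learner handles \<open>S = T + c Z\<close>, and \<open>S mod c = T mod c = T'\<close>.
  From a draw \<open>x\<close> of \<open>T'\<close> one can produce a draw of \<open>x + c Z\<close>. Since
  \<open>T = T mod c + c (T div c)\<close> with \<open>T div c \<le> J = N (a\<^sub>1 + \<dots> + a\<^sub>k)\<close>, this differs from \<open>S\<close> only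
  by shifting \<open>Z\<close> by at most \<open>J\<close>, which costs at most \<open>J binom(2R, R) / 4^R \<le> J / sqrt(2R + 1)\<close> in
  total variation per draw. For \<open>R\<close> large the \<open>m\<close> simulated draws are therefore within \<open>\<delta>/2\<close>
  of genuine draws from \<open>S\<close>, and reducing the learner's hypothesis mod \<open>c\<close> does not increase
  its distance to \<open>S mod c = T'\<close>.
\<close>

section \<open>Total variation through test functions\<close>

text \<open>This is \<open>dtv P Q \<le> d\<close> stated with \<open>[0,1]\<close>-valued test functions instead of events,
  the form in which closeness passes through \<open>bind_pmf\<close>.\<close>
definition tv_close :: "'a pmf \<Rightarrow> 'a pmf \<Rightarrow> real \<Rightarrow> bool" where
  "tv_close P Q d \<longleftrightarrow> (\<forall>h. (\<forall>x. h x \<in> {0..1}) \<longrightarrow>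
      \<bar>measure_pmf.expectation P h - measure_pmf.expectation Q h\<bar> \<le> d)"

lemma integrable_measure_pmf_unit_interval:
  fixes h :: "'a \<Rightarrow> real"
  assumes "\<And>x. h x \<in> {0..1}"
  shows "integrable (measure_pmf P) h"
  by (rule measure_pmf.integrable_const_bound[where B = 1]) (use assms in auto)

lemma expectation_bind_pmf_bounded:
  fixes h :: "'b \<Rightarrow> real"
  assumes "\<And>x. \<bar>h x\<bar> \<le> B"
  shows "measure_pmf.expectation (bind_pmf M N) h
    = measure_pmf.expectation M (\<lambda>x. measure_pmf.expectation (N x) h)"
  unfolding measure_pmf_bind
  by (rule integral_bind[where K = "count_space UNIV" and B = B and B' = 1])
    (use assms measurable_measure_pmf[of N] in \<open>auto simp: measure_pmf.finite_measure\<close>)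

lemma expectation_unit_interval:
  fixes h :: "'a \<Rightarrow> real"
  assumes "\<And>x. h x \<in> {0..1}"
  shows "measure_pmf.expectation P h \<in> {0..1}"
proof -
  have "integrable (measure_pmf P) h"
    using assms by (rule integrable_measure_pmf_unit_interval)
  moreover have "AE x in measure_pmf P. 0 \<le> h x" "AE x in measure_pmf P. h x \<le> 1"
    using assms by simp_all
  ultimately show ?thesis
    using measure_pmf.integral_ge_const measure_pmf.integral_le_const by auto
qed

lemma tv_close_refl: "tv_close P P 0"
  by (simp add: tv_close_def)

lemma tv_close_sym: "tv_close P Q d \<Longrightarrow> tv_close Q P d"
  unfolding tv_close_def by (simp add: abs_minus_commute)

lemma tv_close_mono: "tv_close P Q d \<Longrightarrow> d \<le> d' \<Longrightarrow> tv_close P Q d'"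
  unfolding tv_close_def by (meson order_trans)

lemma tv_close_trans: "tv_close P Q d \<Longrightarrow> tv_close Q R e \<Longrightarrow> tv_close P R (d + e)"
  unfolding tv_close_def by (smt (verit))

lemma tv_close_map_pmf: "tv_close P Q d \<Longrightarrow> tv_close (map_pmf f P) (map_pmf f Q) d"
  unfolding tv_close_def by simp

lemma tv_closeI_one_sided:
  assumes "\<And>h. (\<forall>x. h x \<in> {0..1}) \<Longrightarrow>
    measure_pmf.expectation P h - measure_pmf.expectation Q h \<le> d"
  shows "tv_close P Q d"
  unfolding tv_close_def
proof (intro allI impI)
  fix h :: "'a \<Rightarrow> real"
  assume h: "\<forall>x. h x \<in> {0..1}"
  then have "\<forall>x. 1 - h x \<in> {0..1}" by auto
  moreover have "integrable (measure_pmf M) h" for M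
    using h by (intro integrable_measure_pmf_unit_interval) simp
  then have "measure_pmf.expectation M (\<lambda>x. 1 - h x) = 1 - measure_pmf.expectation M h" for M
    by simp
  ultimately show "\<bar>measure_pmf.expectation P h - measure_pmf.expectation Q h\<bar> \<le> d"
    using assms[OF h] assms[of "\<lambda>x. 1 - h x"] by (simp add: abs_le_iff)
qed

lemma tv_close_bind_pmf:
  assumes "tv_close P Q d" and "\<And>x. x \<in> set_pmf P \<Longrightarrow> tv_close (f x) (g x) e"
  shows "tv_close (bind_pmf P f) (bind_pmf Q g) (d + e)"
  unfolding tv_close_def
proof (intro allI impI)
  fix h :: "'b \<Rightarrow> real"
  assume h: "\<forall>x. h x \<in> {0..1}"
  define F G where "F x = measure_pmf.expectation (f x) h" and "G x = measure_pmf.expectation (g x) h" for x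
  have F: "F x \<in> {0..1}" and G: "G x \<in> {0..1}" for x
    unfolding F_def G_def using expectation_unit_interval h by blast+
  have FG: "\<bar>F x - G x\<bar> \<le> e" if "x \<in> set_pmf P" for x
    using assms(2)[OF that] h unfolding tv_close_def F_def G_def by blast
  have int_F: "integrable (measure_pmf P) F" and int_G: "integrable (measure_pmf P) G"
    using F G by (blast intro: integrable_measure_pmf_unit_interval)+
  then have int_FG: "integrable (measure_pmf P) (\<lambda>x. F x - G x)" by simp
  have "AE x in measure_pmf P. F x - G x \<le> e" "AE x in measure_pmf P. -e \<le> F x - G x"
    by (intro AE_pmfI; use FG in \<open>force simp: abs_le_iff\<close>)+
  with int_FG have "measure_pmf.expectation P (\<lambda>x. F x - G x) \<le> e"
    and "-e \<le> measure_pmf.expectation P (\<lambda>x. F x - G x)"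
    by (blast intro: measure_pmf.integral_le_const measure_pmf.integral_ge_const)+
  moreover have "\<bar>measure_pmf.expectation P G - measure_pmf.expectation Q G\<bar> \<le> d"
    using assms(1) G unfolding tv_close_def by blast
  moreover have h_bound: "\<bar>h x\<bar> \<le> 1" for x
    using h by (simp add: abs_le_iff)
  ultimately show "\<bar>measure_pmf.expectation (bind_pmf P f) h
      - measure_pmf.expectation (bind_pmf Q g) h\<bar> \<le> d + e"
    unfolding expectation_bind_pmf_bounded[OF h_bound] F_def[symmetric] G_def[symmetric]
      Bochner_Integration.integral_diff[OF int_F int_G]
    by linarith
qed

lemma tv_close_iid: "tv_close P Q d \<Longrightarrow> tv_close (iid m P) (iid m Q) (m * d)"
proof (induction m)
  case (Suc m)
  have "tv_close (iid (Suc m) P) (iid (Suc m) Q) (d + m * d)"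
    unfolding iid.simps by (intro tv_close_bind_pmf tv_close_map_pmf Suc)
  then show ?case by (simp add: algebra_simps)
qed (simp add: tv_close_refl)

lemma tv_close_prob:
  assumes "tv_close P Q d"
  shows "\<bar>measure_pmf.prob P E - measure_pmf.prob Q E\<bar> \<le> d"
proof -
  have "\<forall>x. indicator E x \<in> {0::real..1}" by (simp add: indicator_def)
  with assms have "\<bar>measure_pmf.expectation P (indicator E)
      - measure_pmf.expectation Q (indicator E)\<bar> \<le> d"
    unfolding tv_close_def by blast
  then show ?thesis by simp
qed

lemma dtv_map_pmf_le: "dtv (map_pmf f P) (map_pmf f Q) \<le> dtv P Q"
  unfolding dtv_def
proof (rule cSUP_least)
  fix E
  have "bdd_above (range (\<lambda>E. \<bar>measure_pmf.prob P E - measure_pmf.prob Q E\<bar>))"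
  proof (rule bdd_aboveI[of _ 1], clarify)
    fix E
    have "measure_pmf.prob P E \<le> 1" "measure_pmf.prob Q E \<le> 1" by simp_all
    then show "\<bar>measure_pmf.prob P E - measure_pmf.prob Q E\<bar> \<le> 1"
      using measure_nonneg[of P E] measure_nonneg[of Q E] by linarith
  qed
  then show "\<bar>measure_pmf.prob (map_pmf f P) E - measure_pmf.prob (map_pmf f Q) E\<bar>
      \<le> (SUP E. \<bar>measure_pmf.prob P E - measure_pmf.prob Q E\<bar>)"
    using cSUP_upper[OF UNIV_I, of _ "f -` E"] by simp
qed simp

lemma learner_on_close_samples:
  fixes L :: "'a list \<Rightarrow> 'a pmf pmf" and f :: "'a \<Rightarrow> 'b"
  assumes "tv_close P S d"
  shows "measure_pmf.prob (bind_pmf (iid q S) L) {H. dtv S H \<le> eps} - q * d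
    \<le> measure_pmf.prob (map_pmf (map_pmf f) (bind_pmf (iid q P) L)) {H. dtv (map_pmf f S) H \<le> eps}"
proof -
  have close: "tv_close (bind_pmf (iid q P) L) (bind_pmf (iid q S) L) (q * d + 0)"
    by (intro tv_close_bind_pmf tv_close_iid assms tv_close_refl)
  have "measure_pmf.prob (bind_pmf (iid q S) L) {H. dtv S H \<le> eps} - q * d
      \<le> measure_pmf.prob (bind_pmf (iid q P) L) {H. dtv S H \<le> eps}"
    using tv_close_prob[OF close, of "{H. dtv S H \<le> eps}"] by (simp add: abs_le_iff)
  also have "\<dots> \<le> measure_pmf.prob (bind_pmf (iid q P) L)
      (map_pmf f -` {H. dtv (map_pmf f S) H \<le> eps})"
    by (intro measure_pmf.finite_measure_mono) (auto intro: order_trans[OF dtv_map_pmf_le])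
  finally show ?thesis by simp
qed

section \<open>Shifting a symmetric binomial distribution\<close>

lemma central_binomial_Suc:
  "Suc r * ((2 * Suc r) choose Suc r) = 2 * (2 * r + 1) * ((2 * r) choose r)"
proof -
  have "Suc (2 * r) - r = Suc r" by simp
  then have mirror: "Suc (2 * r) choose r = Suc (2 * r) choose Suc r"
    using binomial_symmetric[of r "Suc (2 * r)"] by (simp del: binomial_Suc_Suc)
  have "Suc r * (Suc r * ((2 * Suc r) choose Suc r)) = Suc r * (2 * (Suc r * (Suc (2 * r) choose Suc r)))"
    using Suc_times_binomial[of r "Suc (2 * r)"] mirror by (simp del: binomial_Suc_Suc)
  also have "\<dots> = Suc r * (2 * (2 * r + 1) * ((2 * r) choose r))"
    using Suc_times_binomial[of r "2 * r"] by (simp del: binomial_Suc_Suc)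
  finally show ?thesis by (metis mult_cancel1 nat.distinct(1))
qed

lemma central_binomial_upper_bound:
  "(real ((2 * r) choose r) / 4 ^ r)\<^sup>2 * (2 * r + 1) \<le> 1"
proof (induction r)
  case (Suc r)
  define t z z' where "t = real r" and "z = real ((2 * r) choose r) / 4 ^ r"
    and "z' = real ((2 * Suc r) choose Suc r) / 4 ^ Suc r"
  have "(2 * t + 2) * real ((2 * Suc r) choose Suc r) = 4 * (2 * t + 1) * real ((2 * r) choose r)"
    using arg_cong[OF central_binomial_Suc[of r], of "\<lambda>n. 2 * real n"] unfolding t_def
    by (simp del: binomial_Suc_Suc add: algebra_simps)
  then have step: "(2 * t + 2) * z' = (2 * t + 1) * z"
    unfolding z_def z'_def by (simp add: field_simps del: binomial_Suc_Suc)
  have "((2 * t + 2) * z')\<^sup>2 * (2 * t + 3) = (z\<^sup>2 * (2 * t + 1)) * ((2 * t + 1) * (2 * t + 3))"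
    unfolding step by (simp add: power2_eq_square algebra_simps)
  also have "\<dots> \<le> 1 * (2 * t + 2)\<^sup>2"
    using Suc.IH unfolding z_def t_def
    by (intro mult_mono) (auto simp: power2_eq_square algebra_simps)
  finally have "(2 * t + 2)\<^sup>2 * (z'\<^sup>2 * (2 * t + 3)) \<le> (2 * t + 2)\<^sup>2 * 1"
    by (simp add: power_mult_distrib mult_ac)
  then have "z'\<^sup>2 * (2 * t + 3) \<le> 1"
    by (rule mult_left_le_imp_le) (simp add: t_def add_pos_nonneg)
  then show ?case unfolding z'_def t_def by (simp add: algebra_simps)
qed simp

lemma smoothing_error_le:
  fixes X delta :: real
  assumes "0 \<le> X" and "0 < delta" and "(2 * X / delta)\<^sup>2 \<le> R"
  shows "X * (real ((2 * R) choose R) / 4 ^ R) \<le> delta / 2"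
proof -
  define z where "z = real ((2 * R) choose R) / 4 ^ R"
  have "(2 * X)\<^sup>2 \<le> R * delta\<^sup>2"
    using assms(2,3) by (simp add: power_divide divide_le_eq)
  have "(2 * X * z)\<^sup>2 * (2 * R + 1) = (2 * X)\<^sup>2 * (z\<^sup>2 * (2 * R + 1))"
    by (simp add: power_mult_distrib)
  also have "\<dots> \<le> (2 * X)\<^sup>2 * 1"
    using central_binomial_upper_bound[of R, folded z_def] by (intro mult_left_mono) simp_all
  also have "\<dots> \<le> delta\<^sup>2 * (2 * R + 1)"
  proof -
    have "delta\<^sup>2 * (2 * R + 1) = 2 * (R * delta\<^sup>2) + delta\<^sup>2" by (simp add: algebra_simps)
    moreover have "0 \<le> R * delta\<^sup>2" by simp
    ultimately show ?thesis
      using \<open>(2 * X)\<^sup>2 \<le> R * delta\<^sup>2\<close> zero_le_power2[of delta] by linarith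
  qed
  finally have "(2 * X * z)\<^sup>2 * (2 * R + 1) \<le> delta\<^sup>2 * (2 * R + 1)" .
  then have "(2 * X * z)\<^sup>2 \<le> delta\<^sup>2"
    by (rule mult_right_le_imp_le) simp
  then have "2 * X * z \<le> delta"
    by (rule power2_le_imp_le) (use assms(2) in simp)
  then show ?thesis
    unfolding z_def[symmetric] by simp
qed

lemma sum_shifted_minus_sum:
  fixes f h :: "nat \<Rightarrow> real"
  assumes "f (Suc n) = 0"
  shows "(\<Sum>k\<le>n. f k * h (Suc k)) - (\<Sum>k\<le>n. f k * h k)
    = (\<Sum>k<Suc (Suc n). h k * ((if k = 0 then 0 else f (k - 1)) - f k))"
proof -
  have "(\<Sum>k<Suc (Suc n). h k * (if k = 0 then 0 else f (k - 1))) = (\<Sum>k\<le>n. f k * h (Suc k))"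
    by (subst sum.lessThan_Suc_shift) (simp add: lessThan_Suc_atMost mult.commute)
  moreover have "(\<Sum>k<Suc (Suc n). h k * f k) = (\<Sum>k\<le>n. f k * h k)"
    using assms by (simp add: lessThan_Suc_atMost mult.commute)
  ultimately show ?thesis
    by (simp add: right_diff_distrib sum_subtractf)
qed

lemma sum_positive_decrements_unimodal:
  fixes f :: "nat \<Rightarrow> real"
  assumes up: "\<And>k. k < r \<Longrightarrow> f k \<le> f (Suc k)"
    and down: "\<And>k. r \<le> k \<Longrightarrow> f (Suc k) \<le> f k"
    and "0 \<le> f 0" and "f (Suc n) = 0" and "r \<le> n"
  shows "(\<Sum>k<Suc (Suc n). max 0 ((if k = 0 then 0 else f (k - 1)) - f k)) = f r"
proof -
  define g where "g k = max 0 ((if k = 0 then 0 else f (k - 1)) - f k)" for k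
  have "(\<Sum>k<Suc (Suc n). g k)
      = (\<Sum>k\<in>{0..<Suc r}. g k) + (\<Sum>k\<in>{Suc r..<Suc (Suc n)}. g k)"
    using \<open>r \<le> n\<close> by (subst sum.atLeastLessThan_concat) (auto simp: atLeast0LessThan)
  also have "(\<Sum>k\<in>{0..<Suc r}. g k) = 0"
    using \<open>0 \<le> f 0\<close> up by (intro sum.neutral) (auto simp: g_def gr0_conv_Suc)
  also have "(\<Sum>k\<in>{Suc r..<Suc (Suc n)}. g k) = (\<Sum>k\<in>{r..<Suc n}. g (Suc k))"
    by (rule sum.shift_bounds_Suc_ivl)
  also have "\<dots> = (\<Sum>k\<in>{r..<Suc n}. f k - f (Suc k))"
    by (rule sum.cong) (auto simp: g_def down)
  also have "\<dots> = f r"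
    using \<open>r \<le> n\<close> \<open>f (Suc n) = 0\<close>
    by (subst sum_Suc_diff'[where f = "\<lambda>k. - f k", simplified]) simp_all
  finally show ?thesis unfolding g_def by simp
qed

text \<open>With \<open>f\<close> the probability mass function, \<open>E h(Z + 1) - E h(Z) = \<Sum>\<^sub>k h(k) (f(k - 1) - f(k))\<close> is
  at most the sum of the positive backward differences of the unimodal \<open>f\<close>, which telescopes
  to its mode \<open>f(r)\<close>.\<close>
lemma tv_close_binomial_Suc:
  "tv_close (map_pmf Suc (binomial_pmf (2 * r) (1/2))) (binomial_pmf (2 * r) (1/2))
     (real ((2 * r) choose r) / 4 ^ r)"
proof (rule tv_closeI_one_sided)
  fix h :: "nat \<Rightarrow> real"
  assume h: "\<forall>x. h x \<in> {0..1}"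
  define n where "n = 2 * r"
  define f where "f k = real (n choose k) / 2 ^ n" for k
  define D where "D k = (if k = 0 then 0 else f (k - 1)) - f k" for k
  have weight: "real (n choose k) * (1/2) ^ k * (1/2) ^ (n - k) = f k" for k
  proof (cases "k \<le> n")
    case True
    then have "(1/2::real) ^ k * (1/2) ^ (n - k) = (1/2) ^ n" by (simp add: power_add[symmetric])
    then show ?thesis unfolding f_def by (simp add: power_one_over)
  qed (simp add: f_def binomial_eq_0)
  have "f (Suc n) = 0" by (simp add: f_def)
  have "measure_pmf.expectation (map_pmf Suc (binomial_pmf n (1/2))) h
      - measure_pmf.expectation (binomial_pmf n (1/2)) h
      = (\<Sum>k\<le>n. f k * h (Suc k)) - (\<Sum>k\<le>n. f k * h k)"
    by (simp add: expectation_binomial_pmf' weight)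
  also have "\<dots> = (\<Sum>k<Suc (Suc n). h k * D k)"
    unfolding D_def by (rule sum_shifted_minus_sum) fact
  also have "\<dots> \<le> (\<Sum>k<Suc (Suc n). max 0 (D k))"
    using h mult_left_le_one_le[of "D _" "h _"] mult_nonneg_nonpos[of "h _" "D _"]
    by (intro sum_mono) (fastforce simp: max_def)
  also have "\<dots> = f r"
    unfolding D_def
  proof (rule sum_positive_decrements_unimodal)
    fix k assume "k < r"
    then show "f k \<le> f (Suc k)"
      unfolding f_def n_def by (simp add: divide_right_mono binomial_mono)
  next
    fix k assume "r \<le> k"
    then have "(2 * r) choose (Suc k) \<le> (2 * r) choose k"
      by (cases "Suc k \<le> 2 * r") (auto intro: binomial_antimono simp: binomial_eq_0)
    then show "f (Suc k) \<le> f k"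
      unfolding f_def n_def by (simp add: divide_right_mono)
  qed (simp_all add: f_def n_def \<open>f (Suc n) = 0\<close>)
  also have "f r = real ((2 * r) choose r) / 4 ^ r"
    unfolding f_def n_def by (simp add: power_mult)
  finally show "measure_pmf.expectation (map_pmf Suc (binomial_pmf (2 * r) (1/2))) h
      - measure_pmf.expectation (binomial_pmf (2 * r) (1/2)) h \<le> real ((2 * r) choose r) / 4 ^ r"
    unfolding n_def .
qed

lemma tv_close_binomial_shift:
  "tv_close (map_pmf (\<lambda>z. z + j) (binomial_pmf (2 * r) (1/2))) (binomial_pmf (2 * r) (1/2))
     (j * (real ((2 * r) choose r) / 4 ^ r))"
proof (induction j)
  case (Suc j)
  have "map_pmf (\<lambda>z. z + Suc j) (binomial_pmf (2 * r) (1/2))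
      = map_pmf Suc (map_pmf (\<lambda>z. z + j) (binomial_pmf (2 * r) (1/2)))"
    by (simp add: map_pmf_comp)
  with tv_close_trans[OF tv_close_map_pmf[OF Suc.IH] tv_close_binomial_Suc]
  show ?case by (simp add: field_simps)
qed (simp add: tv_close_refl)

section \<open>Poisson binomial distributions and weighted sums\<close>

lemma pbd_cong: "(\<And>i. i < n \<Longrightarrow> p i = q i) \<Longrightarrow> pbd p n = pbd q n"
  by (induction n) auto

lemma bernoulli_pmf_0: "bernoulli_pmf 0 = return_pmf False"
proof (rule pmf_eqI)
  fix b show "pmf (bernoulli_pmf 0) b = pmf (return_pmf False) b" by (cases b) simp_all
qed

lemma pbd_add_zeros: "(\<And>i. n \<le> i \<Longrightarrow> p i = 0) \<Longrightarrow> pbd p (n + j) = pbd p n"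
  by (induction j) (auto simp: bernoulli_pmf_0 bind_return_pmf')

lemma PBD_mono:
  assumes "D \<in> PBD n" and "n \<le> n'"
  shows "D \<in> PBD n'"
proof -
  obtain p where D: "D = pbd p n" and p: "\<forall>i<n. 0 \<le> p i \<and> p i \<le> 1"
    using assms(1) unfolding PBD_def by auto
  define q where "q i = (if i < n then p i else 0)" for i
  have "pbd q n' = pbd q (n + (n' - n))" using assms(2) by simp
  also have "\<dots> = pbd q n" by (rule pbd_add_zeros) (simp add: q_def)
  also have "\<dots> = D" unfolding D by (rule pbd_cong) (simp add: q_def)
  finally show ?thesis using p unfolding PBD_def by (auto simp: q_def intro!: exI[of _ q])
qed

lemma pbd_const: "p \<in> {0..1} \<Longrightarrow> pbd (\<lambda>_. p) n = binomial_pmf n p"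
proof (induction n)
  case 0
  then show ?case by (simp add: binomial_pmf_0)
next
  case (Suc n)
  show ?case
    unfolding pbd.simps Suc.IH[OF Suc.prems] binomial_pmf_Suc[OF Suc.prems]
    by (subst bind_commute_pmf) (simp add: map_pmf_def add.commute)
qed

lemma binomial_pmf_in_PBD: "p \<in> {0..1} \<Longrightarrow> binomial_pmf n p \<in> PBD n"
  unfolding PBD_def by (auto simp flip: pbd_const)

lemma set_pmf_pbd_le: "x \<in> set_pmf (pbd p n) \<Longrightarrow> x \<le> n"
proof (induction n arbitrary: x)
  case (Suc n)
  then obtain y b where "y \<in> set_pmf (pbd p n)" "x = y + (if b then 1 else 0)" by auto
  with Suc.IH show ?case by fastforce
qed simp

lemma set_pmf_lin_comb_PBD_le:
  assumes "\<forall>D\<in>set Ds. D \<in> PBD n" and "x \<in> set_pmf (lin_comb cs Ds)"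
  shows "x \<le> sum_list cs * n"
  using assms
proof (induction cs Ds arbitrary: x rule: lin_comb.induct)
  case (1 c cs D Ds)
  then obtain y z where y: "y \<in> set_pmf D" and z: "z \<in> set_pmf (lin_comb cs Ds)" and "x = c * y + z"
    by auto
  have "y \<le> n"
    using "1.prems"(1) y by (auto simp: PBD_def dest: set_pmf_pbd_le)
  then have "c * y \<le> c * n" by (rule mult_le_mono2)
  moreover have "z \<le> sum_list cs * n"
    using "1.IH"[OF y _ z] "1.prems"(1) by simp
  ultimately have "x \<le> c * n + sum_list cs * n" using \<open>x = c * y + z\<close> by linarith
  then show ?case by (simp add: algebra_simps)
qed auto

lemma lin_comb_snoc:
  "length cs = length Ds \<Longrightarrow>
   lin_comb (cs @ [c]) (Ds @ [D]) = bind_pmf (lin_comb cs Ds) (\<lambda>x. map_pmf (\<lambda>z. x + c * z) D)"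
proof (induction cs Ds rule: list_induct2)
  case Nil
  then show ?case by (simp add: bind_return_pmf map_pmf_def)
next
  case (Cons c0 cs D0 Ds)
  then show ?case
    by (simp add: map_bind_pmf bind_map_pmf bind_assoc_pmf map_pmf_comp add.assoc)
qed

section \<open>The reduction\<close>

primrec perturb :: "('a \<Rightarrow> 'b pmf) \<Rightarrow> 'a list \<Rightarrow> 'b list pmf" where
  "perturb K [] = return_pmf []"
| "perturb K (x # xs) = bind_pmf (K x) (\<lambda>y. map_pmf (\<lambda>ys. y # ys) (perturb K xs))"

lemma iid_bind_perturb: "bind_pmf (iid m P) (perturb K) = iid m (bind_pmf P K)"
proof (induction m)
  case 0
  then show ?case by (simp add: bind_return_pmf)
next
  case (Suc m)
  have "bind_pmf (iid (Suc m) P) (perturb K) = bind_pmf P (\<lambda>x. bind_pmf (iid m P)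
      (\<lambda>xs. bind_pmf (K x) (\<lambda>y. map_pmf (\<lambda>ys. y # ys) (perturb K xs))))"
    by (simp add: bind_map_pmf bind_assoc_pmf)
  also have "\<dots> = bind_pmf P (\<lambda>x. bind_pmf (K x)
      (\<lambda>y. map_pmf (\<lambda>ys. y # ys) (bind_pmf (iid m P) (perturb K))))"
    by (subst bind_commute_pmf) (simp add: map_bind_pmf)
  also have "\<dots> = iid (Suc m) (bind_pmf P K)"
    by (simp add: Suc.IH bind_assoc_pmf)
  finally show ?case .
qed

definition smoothing_kernel :: "nat \<Rightarrow> nat \<Rightarrow> nat \<Rightarrow> nat pmf" where
  "smoothing_kernel c R x = map_pmf (\<lambda>z. x + c * z) (binomial_pmf (2 * R) (1/2))"

lemma map_mod_bind_smoothing_kernel: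
  "map_pmf (\<lambda>x. x mod c) (bind_pmf T (smoothing_kernel c R)) = map_pmf (\<lambda>x. x mod c) T"
  unfolding smoothing_kernel_def map_bind_pmf map_pmf_comp
  by (simp add: map_pmf_const map_pmf_def[symmetric])

lemma smoothed_weighted_sum:
  assumes "length W = length Ts" and "\<forall>T\<in>set Ts. T \<in> PBD N" and "N \<le> 2 * R"
  defines "Ss \<equiv> Ts @ [binomial_pmf (2 * R) (1/2)]"
  shows "lin_comb (W @ [c]) Ss = bind_pmf (lin_comb W Ts) (smoothing_kernel c R)"
    and "length Ss = Suc (length W)"
    and "\<forall>S\<in>set Ss. S \<in> PBD (2 * R)"
  using assms PBD_mono[of _ N "2 * R"] binomial_pmf_in_PBD[of "1/2" "2 * R"]
  by (auto simp: lin_comb_snoc smoothing_kernel_def[abs_def])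

lemma tv_close_smoothing_mod:
  fixes J :: nat
  assumes "\<And>x. x \<in> set_pmf T \<Longrightarrow> x \<le> J"
  shows "tv_close (bind_pmf (map_pmf (\<lambda>x. x mod c) T) (smoothing_kernel c R))
    (bind_pmf T (smoothing_kernel c R)) (J * (real ((2 * R) choose R) / 4 ^ R))"
proof -
  define B z where "B = binomial_pmf (2 * R) (1/2)" and "z = real ((2 * R) choose R) / 4 ^ R"
  have "tv_close (smoothing_kernel c R (x mod c)) (smoothing_kernel c R x) (J * z)"
    if "x \<in> set_pmf T" for x
  proof -
    have "smoothing_kernel c R x
        = map_pmf (\<lambda>y. x mod c + c * y) (map_pmf (\<lambda>y. y + x div c) B)"
      unfolding smoothing_kernel_def B_def map_pmf_comp
      by (rule map_pmf_cong) (simp_all add: algebra_simps)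
    moreover have "smoothing_kernel c R (x mod c) = map_pmf (\<lambda>y. x mod c + c * y) B"
      unfolding smoothing_kernel_def B_def ..
    ultimately have
      "tv_close (smoothing_kernel c R (x mod c)) (smoothing_kernel c R x) (x div c * z)"
      unfolding B_def z_def by (metis tv_close_map_pmf tv_close_sym tv_close_binomial_shift)
    moreover have "x div c \<le> J"
      by (rule le_trans[OF div_le_dividend assms[OF that]])
    then have "x div c * z \<le> J * z"
      unfolding z_def by (intro mult_right_mono) simp_all
    ultimately show ?thesis
      by (rule tv_close_mono)
  qed
  then have "tv_close (bind_pmf T (\<lambda>x. smoothing_kernel c R (x mod c)))
      (bind_pmf T (smoothing_kernel c R)) (0 + J * z)"
    by (intro tv_close_bind_pmf tv_close_refl)
  then show ?thesis
    by (simp add: bind_map_pmf z_def)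
qed

lemma learner_on_smoothed_residues:
  fixes T :: "nat pmf" and L :: "nat list \<Rightarrow> nat pmf pmf" and J :: nat
  assumes T: "\<And>x. x \<in> set_pmf T \<Longrightarrow> x \<le> J" and "0 < delta"
    and "(2 * (real q * real J) / delta)\<^sup>2 \<le> R"
    and learns: "1 - delta / 2 \<le> measure_pmf.prob
      (bind_pmf (iid q (bind_pmf T (smoothing_kernel c R))) L)
      {H. dtv (bind_pmf T (smoothing_kernel c R)) H \<le> eps}"
  shows "1 - delta \<le> measure_pmf.prob (map_pmf (map_pmf (\<lambda>x. x mod c))
      (bind_pmf (iid q (bind_pmf (map_pmf (\<lambda>x. x mod c) T) (smoothing_kernel c R))) L))
      {H. dtv (map_pmf (\<lambda>x. x mod c) T) H \<le> eps}"
proof -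
  define z where "z = real ((2 * R) choose R) / 4 ^ R"
  have close: "tv_close (bind_pmf (map_pmf (\<lambda>x. x mod c) T) (smoothing_kernel c R))
      (bind_pmf T (smoothing_kernel c R)) (J * z)"
    unfolding z_def by (rule tv_close_smoothing_mod) (rule T)
  have "q * (J * z) \<le> delta / 2"
    using smoothing_error_le[of "q * J" delta R] assms(2,3) unfolding z_def by (simp add: mult.assoc)
  moreover have "measure_pmf.prob (bind_pmf (iid q (bind_pmf T (smoothing_kernel c R))) L)
      {H. dtv (bind_pmf T (smoothing_kernel c R)) H \<le> eps} - q * (J * z)
    \<le> measure_pmf.prob (map_pmf (map_pmf (\<lambda>x. x mod c))
      (bind_pmf (iid q (bind_pmf (map_pmf (\<lambda>x. x mod c) T) (smoothing_kernel c R))) L))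
      {H. dtv (map_pmf (\<lambda>x. x mod c) T) H \<le> eps}"
    using learner_on_close_samples[OF close, of q L eps "\<lambda>x. x mod c"]
    unfolding map_mod_bind_smoothing_kernel .
  ultimately show ?thesis
    using learns by linarith
qed

lemma valid_weights_cases:
  assumes "valid_weights a"
  obtains W c where "a = 0 # W @ [c]"
  using assms unfolding valid_weights_def
  by (cases a; cases "tl a" rule: rev_cases) auto

text \<open>\<open>R \<ge> N\<close> keeps PBD\<open>\<^sub>N\<close> components admissible as PBD\<open>\<^sub>2\<^sub>R\<close> distributions; the second
  summand is what \<open>learner_on_smoothed_residues\<close> needs for \<open>J = N (a\<^sub>1 + \<dots> + a\<^sub>k)\<close>.\<close>
definition smoothing_half_trials ::
  "(nat list \<Rightarrow> real \<Rightarrow> real \<Rightarrow> nat) \<Rightarrow> nat \<Rightarrow> real \<Rightarrow> real \<Rightarrow> nat list \<Rightarrow> nat" where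
  "smoothing_half_trials m N eps delta a =
     N + nat \<lceil>(2 * (real (m a eps (delta / 2)) * real (sum_list a * N)) / delta)\<^sup>2\<rceil>"

lemma smoothing_half_trials_ge:
  "N \<le> smoothing_half_trials m N eps delta a"
  "(2 * (real (m a eps (delta / 2)) * real (sum_list a * N)) / delta)\<^sup>2
    \<le> smoothing_half_trials m N eps delta a"
  unfolding smoothing_half_trials_def by (simp_all add: add_increasing real_nat_ceiling_ge)

definition mod_learner ::
  "(nat \<Rightarrow> real \<Rightarrow> real \<Rightarrow> nat list \<Rightarrow> nat list \<Rightarrow> nat pmf pmf)
   \<Rightarrow> (nat list \<Rightarrow> real \<Rightarrow> real \<Rightarrow> nat) \<Rightarrow> nat \<Rightarrow> real \<Rightarrow> real \<Rightarrow> nat list \<Rightarrow> nat list \<Rightarrow> nat pmf pmf" where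
  "mod_learner A m N eps delta a xs =
     (let R = smoothing_half_trials m N eps delta a in
      bind_pmf (perturb (smoothing_kernel (last a) R) xs)
        (\<lambda>ys. map_pmf (map_pmf (\<lambda>x. x mod last a)) (A (2 * R) eps (delta / 2) a ys)))"

lemma run_mod_learner:
  fixes m :: "nat list \<Rightarrow> real \<Rightarrow> real \<Rightarrow> nat"
    and N :: nat and eps delta :: real and a :: "nat list"
  defines "R \<equiv> smoothing_half_trials m N eps delta a"
  shows "run_learner (mod_learner A m) N eps delta a q D =
    map_pmf (map_pmf (\<lambda>x. x mod last a))
      (bind_pmf (iid q (bind_pmf D (smoothing_kernel (last a) R))) (A (2 * R) eps (delta / 2) a))"
proof -
  have "run_learner (mod_learner A m) N eps delta a q D
      = bind_pmf (bind_pmf (iid q D) (perturb (smoothing_kernel (last a) R)))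
          (\<lambda>ys. map_pmf (map_pmf (\<lambda>x. x mod last a)) (A (2 * R) eps (delta / 2) a ys))"
    unfolding run_learner_def mod_learner_def Let_def R_def by (simp add: bind_assoc_pmf)
  then show ?thesis by (simp add: iid_bind_perturb map_bind_pmf)
qed

theorem theorem55:
  fixes A :: "nat \<Rightarrow> real \<Rightarrow> real \<Rightarrow> nat list \<Rightarrow> nat list \<Rightarrow> nat pmf pmf"
    and m :: "nat list \<Rightarrow> real \<Rightarrow> real \<Rightarrow> nat"
  assumes A_learns:
    "\<forall>N eps delta a Ss. eps > 0 \<longrightarrow> delta > 0 \<longrightarrow> valid_weights a \<longrightarrow>
       length Ss = length a - 1 \<longrightarrow> (\<forall>S\<in>set Ss. S \<in> PBD N) \<longrightarrow>
       measure_pmf.prob (run_learner A N eps delta a (m a eps delta) (lin_comb (tl a) Ss))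
         {H. dtv (lin_comb (tl a) Ss) H \<le> eps} \<ge> 1 - delta"
  shows
    "\<exists>A'. \<forall>N eps delta a Ts. eps > 0 \<longrightarrow> delta > 0 \<longrightarrow> valid_weights a \<longrightarrow>
       length Ts = length a - 2 \<longrightarrow> (\<forall>T\<in>set Ts. T \<in> PBD N) \<longrightarrow>
       (let T' = map_pmf (\<lambda>x. x mod last a) (lin_comb (butlast (tl a)) Ts) in
        measure_pmf.prob (run_learner A' N eps delta a (m a eps (delta / 2)) T')
          {H. dtv T' H \<le> eps} \<ge> 1 - delta)"
proof (intro exI[of _ "mod_learner A m"] allI impI)
  fix N :: nat and eps delta :: real and a :: "nat list" and Ts :: "nat pmf list"
  assume eps: "eps > 0" and delta: "delta > 0" and a: "valid_weights a"
    and len: "length Ts = length a - 2" and Ts: "\<forall>T\<in>set Ts. T \<in> PBD N"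
  obtain W c where a_eq: "a = 0 # W @ [c]"
    using a by (rule valid_weights_cases)
  define R q where "R = smoothing_half_trials m N eps delta a" and "q = m a eps (delta / 2)"
  have "length W = length Ts" and "N \<le> 2 * R"
    using len smoothing_half_trials_ge(1)[of N m eps delta a] by (simp_all add: a_eq R_def)
  note smoothed = smoothed_weighted_sum(1)[OF this(1) Ts this(2), of c]
    smoothed_weighted_sum(2,3)[OF this(1) Ts this(2)]
  have learns: "1 - delta / 2 \<le> measure_pmf.prob
      (bind_pmf (iid q (bind_pmf (lin_comb W Ts) (smoothing_kernel c R))) (A (2 * R) eps (delta / 2) a))
      {H. dtv (bind_pmf (lin_comb W Ts) (smoothing_kernel c R)) H \<le> eps}"
    using A_learns[rule_format, of eps "delta / 2" a "Ts @ [binomial_pmf (2 * R) (1/2)]" "2 * R"]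
      eps delta a smoothed unfolding run_learner_def q_def by (simp add: a_eq)
  have bound: "x \<le> sum_list a * N" if "x \<in> set_pmf (lin_comb W Ts)" for x
    using set_pmf_lin_comb_PBD_le[OF Ts that] by (simp add: a_eq add_mult_distrib)
  have R_large: "(2 * (real q * real (sum_list a * N)) / delta)\<^sup>2 \<le> R"
    using smoothing_half_trials_ge(2) unfolding R_def q_def .
  show "let T' = map_pmf (\<lambda>x. x mod last a) (lin_comb (butlast (tl a)) Ts) in
      1 - delta \<le> measure_pmf.prob (run_learner (mod_learner A m) N eps delta a (m a eps (delta / 2)) T')
        {H. dtv T' H \<le> eps}"
    using learner_on_smoothed_residues[OF bound delta R_large learns]
    unfolding Let_def run_mod_learner R_def[symmetric] q_def[symmetric] by (simp add: a_eq)
qed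

end
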